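(* Let $n\geq2$ be an integer, let $\alpha\geq5$, and let $f:\mathbb{R}^n\to[0,\infty)$ be a log-concave function with $\int f=1$. Denote $K=\{x\in\mathbb{R}^n: f(x)\geq e^{-\alpha n}f(0)\}$. Then $$ \int_Kf(x)\,dx\geq1-e^{-\alpha n/8}. $$
   Context: A function $f\geq0$ is log-concave if $f(\lambda x+(1-\lambda)y)\geq f(x)^\lambda f(y)^{1-\lambda}$ for all $x,y$ and $0<\lambda<1$. *)

theory Defs
  imports "HOL-Analysis.Analysis"
begin

definition log_concave :: "('a::real_vector \<Rightarrow> real) \<Rightarrow> bool" where
  "log_concave f \<longleftrightarrow> (\<forall>x. f x \<ge> 0) \<and>
     (\<forall>x y l. 0 < l \<and> l < 1 \<longrightarrow>
        f (l *\<^sub>R x + (1 - l) *\<^sub>R y) \<ge> f x powr l * f y powr (1 - l))"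

end

theory Submission
  imports Defs
begin

text \<open>
  Log-concavity at the midpoint of x and 0 gives f (x/2) \<ge> sqrt (f x * f 0), so outside K
  we have f (x/2) \<ge> exp (\<alpha> n / 2) * f x.  Integrating over the complement of K and
  substituting x/2 yields that its mass is at most exp (- \<alpha> n / 2) * 2^n \<le> exp (- \<alpha> n / 8).
  The last step only needs \<alpha> \<ge> 8/3.
\<close>

lemma has_integral_scaleR_UNIV:
  fixes f :: "'a::euclidean_space \<Rightarrow> 'b::banach"
  assumes f: "(f has_integral i) UNIV" and m: "m > 0"
  shows "((\<lambda>x. f (m *\<^sub>R x)) has_integral i /\<^sub>R m ^ DIM('a)) UNIV"
proof -
  have box: "((\<lambda>x. f (m *\<^sub>R x)) has_integral integral (cbox (m *\<^sub>R a) (m *\<^sub>R b)) f /\<^sub>R m ^ DIM('a))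
               (cbox a b)" for a b
  proof -
    have "f integrable_on cbox (m *\<^sub>R a) (m *\<^sub>R b)"
      using f has_integral_integrable integrable_on_subcbox by blast
    from has_integral_affinity'[OF integrable_integral[OF this] m, of 0] m show ?thesis
      by simp
  qed
  show ?thesis
    unfolding has_integral_alt'
  proof (intro conjI allI impI)
    fix a b show "(\<lambda>x. if x \<in> UNIV then f (m *\<^sub>R x) else 0) integrable_on cbox a b"
      using box by auto
  next
    fix e :: real assume "e > 0"
    then have "e * m ^ DIM('a) > 0" using m by simp
    with f obtain B where "B > 0" and
      B: "\<And>a b. ball 0 B \<subseteq> cbox a b \<Longrightarrow> norm (integral (cbox a b) f - i) < e * m ^ DIM('a)"
      unfolding has_integral_alt' by force
    show "\<exists>B>0. \<forall>a b. ball 0 B \<subseteq> cbox a b \<longrightarrow>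
            norm (integral (cbox a b) (\<lambda>x. if x \<in> UNIV then f (m *\<^sub>R x) else 0) - i /\<^sub>R m ^ DIM('a)) < e"
    proof (intro exI[of _ "B / m"] conjI allI impI)
      show "B / m > 0" using \<open>B > 0\<close> m by simp
      fix a b :: 'a assume sub: "ball 0 (B / m) \<subseteq> cbox a b"
      have "ball 0 B \<subseteq> cbox (m *\<^sub>R a) (m *\<^sub>R b)"
      proof
        fix y :: 'a assume "y \<in> ball 0 B"
        then have "y /\<^sub>R m \<in> cbox a b" using m sub by (auto simp: field_simps)
        then show "y \<in> cbox (m *\<^sub>R a) (m *\<^sub>R b)" using m
          by (auto simp: mem_box field_simps inner_simps)
      qed
      then have "norm (integral (cbox (m *\<^sub>R a) (m *\<^sub>R b)) f - i) / m ^ DIM('a) < e"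
        using B m by (simp add: pos_divide_less_eq)
      then show "norm (integral (cbox a b) (\<lambda>x. if x \<in> UNIV then f (m *\<^sub>R x) else 0) - i /\<^sub>R m ^ DIM('a)) < e"
        using integral_unique[OF box[of a b]] m by (simp add: divide_inverse_commute flip: scaleR_diff_right)
    qed
  qed
qed

lemma sublevel_set_lebesgue_measurable:
  fixes f :: "'a::euclidean_space \<Rightarrow> real"
  assumes "f integrable_on UNIV"
  shows "{x. f x < c} \<in> sets lebesgue"
proof -
  have "f \<in> borel_measurable lebesgue"
    using integrable_imp_measurable[OF assms] by (simp add: lebesgue_on_UNIV_eq)
  then show ?thesis
    by (simp add: borel_measurable_iff_less)
qed

lemma integrable_on_lebesgue_measurable_subset:
  fixes f :: "'a::euclidean_space \<Rightarrow> real"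
  assumes "f integrable_on UNIV" and "\<And>x. f x \<ge> 0" and "S \<in> sets lebesgue"
  shows "f integrable_on S"
proof -
  have "set_integrable lebesgue UNIV f"
    using assms(1,2) nonnegative_absolutely_integrable_1 by blast
  then have "set_integrable lebesgue S f"
    using assms(3) by (rule set_integrable_subset) simp
  then show ?thesis
    by (simp add: absolutely_integrable_on_def)
qed

lemma integral_add_integral_Compl:
  fixes f :: "'a::euclidean_space \<Rightarrow> real"
  assumes "f integrable_on UNIV" and "\<And>x. f x \<ge> 0" and "S \<in> sets lebesgue"
  shows "integral S f + integral (- S) f = integral UNIV f"
proof -
  have "- S \<in> sets lebesgue"
    using assms(3) by (simp add: Compl_in_sets_lebesgue)
  then have "f integrable_on S" "f integrable_on - S"
    using assms integrable_on_lebesgue_measurable_subset by blast+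
  then have "integral (S \<union> - S) f = integral S f + integral (- S) f"
    by (intro integral_Un) simp_all
  then show ?thesis
    by simp
qed

lemma log_concave_midpoint:
  assumes "log_concave f"
  shows "sqrt (f x * f y) \<le> f (midpoint x y)"
proof -
  have "f x \<ge> 0" "f y \<ge> 0"
    using assms by (auto simp: log_concave_def)
  then have "sqrt (f x * f y) = f x powr (1/2) * f y powr (1 - 1/2)"
    by (simp add: powr_half_sqrt real_sqrt_mult)
  also have "\<dots> \<le> f ((1/2) *\<^sub>R x + (1 - 1/2) *\<^sub>R y)"
    using assms[unfolded log_concave_def, THEN conjunct2, rule_format, of "1/2" x y] by simp
  also have "(1/2) *\<^sub>R x + (1 - 1/2) *\<^sub>R y = midpoint x y"
    by (simp add: midpoint_def scaleR_add_right)
  finally show ?thesis .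
qed

lemma log_concave_half_scaleR_ge:
  assumes "log_concave f" and "f x \<le> exp (- t) * f 0"
  shows "exp (t / 2) * f x \<le> f ((1/2) *\<^sub>R x)"
proof -
  have "f x \<ge> 0"
    using assms(1) by (simp add: log_concave_def)
  have "exp t * f x \<le> f 0"
    using assms(2) by (simp add: exp_minus field_simps)
  have "f x * (exp t * f x) = (exp (t / 2) * f x)\<^sup>2"
    by (simp add: power2_eq_square flip: exp_add)
  then have "exp (t / 2) * f x = sqrt (f x * (exp t * f x))"
    using \<open>f x \<ge> 0\<close> by simp
  also have "\<dots> \<le> sqrt (f x * f 0)"
    using \<open>f x \<ge> 0\<close> \<open>exp t * f x \<le> f 0\<close> by (simp add: mult_left_mono)
  also have "\<dots> \<le> f (midpoint x 0)"
    using assms(1) by (rule log_concave_midpoint)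
  finally show ?thesis
    by (simp add: midpoint_def)
qed

lemma log_concave_integral_sublevel_le:
  fixes f :: "'a::euclidean_space \<Rightarrow> real"
  assumes lc: "log_concave f" and f: "(f has_integral i) UNIV"
  shows "integral {x. f x < exp (- t) * f 0} f \<le> 2 ^ DIM('a) * exp (- t / 2) * i"
proof -
  define S where "S = {x. f x < exp (- t) * f 0}"
  have nonneg: "f x \<ge> 0" for x
    using lc by (simp add: log_concave_def)
  have f_int: "f integrable_on UNIV"
    using f by (rule has_integral_integrable)
  then have "f integrable_on S"
    using nonneg sublevel_set_lebesgue_measurable[OF f_int]
    unfolding S_def by (rule integrable_on_lebesgue_measurable_subset)
  then have "((\<lambda>x. if x \<in> S then f x else 0) has_integral integral S f) UNIV"
    by (simp add: has_integral_restrict_UNIV integrable_integral)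
  then have "((\<lambda>x. exp (t / 2) * (if x \<in> S then f x else 0)) has_integral exp (t / 2) * integral S f) UNIV"
    by (rule has_integral_mult_right)
  moreover have "((\<lambda>x. f ((1/2) *\<^sub>R x)) has_integral 2 ^ DIM('a) * i) UNIV"
    using has_integral_scaleR_UNIV[OF f, of "1/2"] by (simp add: power_one_over)
  moreover have "exp (t / 2) * (if x \<in> S then f x else 0) \<le> f ((1/2) *\<^sub>R x)" for x
  proof (cases "x \<in> S")
    case True
    then show ?thesis
      using log_concave_half_scaleR_ge[OF lc, of x t] unfolding S_def by simp
  qed (simp add: nonneg)
  ultimately have "exp (t / 2) * integral S f \<le> 2 ^ DIM('a) * i"
    by (rule has_integral_le)
  then show ?thesis
    unfolding S_def by (simp add: exp_minus field_simps)
qed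

lemma two_power_mult_exp_le:
  fixes \<alpha> :: real
  assumes "\<alpha> \<ge> 8 / 3"
  shows "2 ^ k * exp (- \<alpha> * k / 2) \<le> exp (- \<alpha> * k / 8)"
proof -
  have "k * ln 2 \<le> k * (3 * \<alpha> / 8)"
    using ln_2_less_1 assms by (intro mult_left_mono) simp_all
  have "(2::real) ^ k = exp (k * ln 2)"
    by (simp add: exp_of_nat_mult)
  then have "2 ^ k * exp (- \<alpha> * k / 2) = exp (k * ln 2 + - \<alpha> * k / 2)"
    by (simp only: exp_add)
  also have "\<dots> \<le> exp (- \<alpha> * k / 8)"
    using \<open>k * ln 2 \<le> k * (3 * \<alpha> / 8)\<close> by (simp add: algebra_simps)
  finally show ?thesis .
qed

theorem corollary5p3:
  fixes f :: "real ^ 'n \<Rightarrow> real" and \<alpha> :: real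
  assumes "CARD('n) \<ge> 2"
    and "\<alpha> \<ge> 5"
    and "\<And>x. f x \<ge> 0"
    and "log_concave f"
    and "(f has_integral 1) UNIV"
  shows "integral {x. f x \<ge> exp (- \<alpha> * real CARD('n)) * f 0} f
           \<ge> 1 - exp (- \<alpha> * real CARD('n) / 8)"
proof -
  define n where "n = CARD('n)"
  define S where "S = {x. f x < exp (- \<alpha> * n) * f 0}"
  have f: "f integrable_on UNIV"
    using assms(5) by (rule has_integral_integrable)
  then have "S \<in> sets lebesgue"
    unfolding S_def by (rule sublevel_set_lebesgue_measurable)
  then have "integral S f + integral (- S) f = integral UNIV f"
    by (rule integral_add_integral_Compl[OF f assms(3)])
  moreover have "- S = {x. f x \<ge> exp (- \<alpha> * n) * f 0}"
    unfolding S_def by auto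
  ultimately have "integral S f + integral {x. f x \<ge> exp (- \<alpha> * n) * f 0} f = 1"
    using assms(5) by (simp add: integral_unique)
  moreover have "integral S f \<le> 2 ^ n * exp (- \<alpha> * n / 2)"
    using log_concave_integral_sublevel_le[OF assms(4,5), of "\<alpha> * n"] unfolding S_def n_def by simp
  moreover have "2 ^ n * exp (- \<alpha> * n / 2) \<le> exp (- \<alpha> * n / 8)"
    using assms(2) by (intro two_power_mult_exp_le) simp
  ultimately show ?thesis
    unfolding n_def by linarith
qed

end
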